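(* Let $$\alpha=\frac{1}{3}\left(3+\sqrt[3]{\tfrac12\left(27-3\sqrt{69}\right)}+\sqrt[3]{\tfrac12\left(27+3\sqrt{69}\right)}\right)\approx 2.3247,$$ $$\beta=\frac{1}{3}\left(2+\sqrt[3]{\tfrac12\left(97-3\sqrt{69}\right)}+\sqrt[3]{\tfrac12\left(97+3\sqrt{69}\right)}\right)\approx 3.0796,$$ let $g(x)=\alpha x(1-x)$, $h(x)=\beta x(1-x)$, and let $$p_\pm=\frac{\beta+1\pm\sqrt{(\beta+1)(\beta-3)}}{2\beta}$$ be the period-2 points of $h$. Then (a) $p_-=\frac{\alpha-1}{\alpha}$, (b) $h\!\left(\frac1\alpha\right)=p_+$, and (c) $g(p_+)=\frac1\alpha$. Consequently the set $\Lambda=\left\{\frac{\alpha-1}{\alpha},\ \frac1\alpha,\ p_+\right\}$ consists of three points, satisfies $\Lambda=g(\Lambda)\cup h(\Lambda)$ (a 3-point toss-and-catch), and contains the bridging point $\frac1\alpha$, which is a periodic point of neither $g$ nor $h$.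
   Context: For $\gamma\in\mathbb{R}$ let $f_\gamma(x)=\gamma x(1-x)$ denote the logistic map; its nontrivial fixed point is $\frac{\gamma-1}{\gamma}$. The logistic IFS is the pair $\{g,h\}=\{f_\alpha,f_\beta\}$ with $\alpha<\beta$, where at each step $g$ is applied with probability $p\in(0,1)$ and $h$ with probability $1-p$, independently. An invariant set of the IFS is a set $\Lambda$ with $\Lambda=g(\Lambda)\cup h(\Lambda)$; a finite invariant set with $n$ points is called an $n$-point toss-and-catch. A bridging point is a point of $\Lambda$ that belongs to neither the union $\Lambda_g$ of all periodic orbits of $g$ nor the union $\Lambda_h$ of all periodic orbits of $h$. *)

theory Defs
  imports Complex_Main
begin

definition logistic :: "real \<Rightarrow> real \<Rightarrow> real" where
  "logistic \<gamma> x = \<gamma> * x * (1 - x)"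

definition periodic_point :: "(real \<Rightarrow> real) \<Rightarrow> real \<Rightarrow> bool" where
  "periodic_point f x \<longleftrightarrow> (\<exists>n>0. (f ^^ n) x = x)"

definition ifs_invariant :: "(real \<Rightarrow> real) \<Rightarrow> (real \<Rightarrow> real) \<Rightarrow> real set \<Rightarrow> bool" where
  "ifs_invariant g h \<Lambda> \<longleftrightarrow> \<Lambda> = g ` \<Lambda> \<union> h ` \<Lambda>"

definition bridging_point :: "(real \<Rightarrow> real) \<Rightarrow> (real \<Rightarrow> real) \<Rightarrow> real set \<Rightarrow> real \<Rightarrow> bool" where
  "bridging_point g h \<Lambda> x \<longleftrightarrow> x \<in> \<Lambda> \<and> \<not> periodic_point g x \<and> \<not> periodic_point h x"

end

theory Submission
  imports Defs
begin

text \<open>Write \<open>a = \<alpha> - 1\<close>. Cardano's formula shows that \<open>a\<close> is the plastic number,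
  the real root of \<open>a\<^sup>3 = a + 1\<close>, and that \<open>\<beta>\<close> is the unique positive root of
  \<open>x\<^sup>3 - 2x\<^sup>2 - 3x - 1\<close>, which is \<open>a\<^sup>4\<close>. Hence \<open>g = f\<^bsub>a\<^sup>3\<^esub>\<close>, \<open>h = f\<^bsub>a\<^sup>4\<^esub>\<close>
  and \<open>\<Lambda> = {a\<^sup>-\<^sup>1, a\<^sup>-\<^sup>2, a\<^sup>-\<^sup>3}\<close>. Using \<open>1 - a\<^sup>-\<^sup>3 = a\<^sup>-\<^sup>2\<close> and \<open>1 - a\<^sup>-\<^sup>1 = a\<^sup>-\<^sup>5\<close>,
  \<open>g\<close> maps \<open>a\<^sup>-\<^sup>1 \<mapsto> a\<^sup>-\<^sup>3 \<mapsto> a\<^sup>-\<^sup>2 \<mapsto> a\<^sup>-\<^sup>2\<close> and \<open>h\<close> maps \<open>a\<^sup>-\<^sup>3 \<mapsto> a\<^sup>-\<^sup>1 \<leftrightarrow> a\<^sup>-\<^sup>2\<close>,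
  so \<open>a\<^sup>-\<^sup>3 = 1/\<alpha>\<close> is caught by an orbit of each map but lies on neither.\<close>

lemma cardano_cube:
  fixes c e :: real
  defines "t \<equiv> root 3 ((c - e) / 2) + root 3 ((c + e) / 2)"
  shows "t ^ 3 = c + 3 * root 3 ((c\<^sup>2 - e\<^sup>2) / 4) * t"
proof -
  define u v where "u = root 3 ((c - e) / 2)" and "v = root 3 ((c + e) / 2)"
  have "u * v = root 3 ((c\<^sup>2 - e\<^sup>2) / 4)"
    unfolding u_def v_def
    by (simp add: real_root_mult [symmetric] power2_eq_square algebra_simps)
  moreover have "u ^ 3 + v ^ 3 = c"
    unfolding u_def v_def by (simp add: odd_real_root_pow field_simps)
  moreover have "(u + v) ^ 3 = u ^ 3 + v ^ 3 + 3 * (u * v) * (u + v)"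
    by (simp add: power3_eq_cube algebra_simps)
  ultimately show ?thesis
    unfolding t_def u_def v_def by simp
qed

lemma cube_root_add_pos:
  fixes x y :: real
  assumes "0 < x + y"
  shows "0 < root 3 x + root 3 y"
proof -
  have "root 3 (- y) < root 3 x"
    using assms by (simp add: real_root_less_iff)
  then show ?thesis
    by (simp add: real_root_minus)
qed

lemma plastic_number_from_cardano:
  fixes a :: real
  assumes "a = (root 3 ((27 - 3 * sqrt 69) / 2) + root 3 ((27 + 3 * sqrt 69) / 2)) / 3"
  shows "a ^ 3 = a + 1" and "0 < a"
proof -
  have "root 3 ((27\<^sup>2 - (3 * sqrt 69)\<^sup>2) / 4) = 3"
    by (simp add: power_mult_distrib real_root_pos_unique)
  moreover have "3 * a = root 3 ((27 - 3 * sqrt 69) / 2) + root 3 ((27 + 3 * sqrt 69) / 2)"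
    using assms by simp
  ultimately have "(3 * a) ^ 3 = 27 + 9 * (3 * a)"
    using cardano_cube [of 27 "3 * sqrt 69"] by simp
  then show "a ^ 3 = a + 1"
    by (simp add: power_mult_distrib)
  have "0 < root 3 ((27 - 3 * sqrt 69) / 2) + root 3 ((27 + 3 * sqrt 69) / 2)"
    by (rule cube_root_add_pos) (simp add: field_simps)
  then show "0 < a"
    using assms by simp
qed

definition beta_cubic :: "real \<Rightarrow> real" where
  "beta_cubic x = x ^ 3 - 2 * x\<^sup>2 - 3 * x - 1"

lemma beta_cubic_from_cardano:
  fixes b :: real
  assumes "b = (2 + root 3 ((97 - 3 * sqrt 69) / 2) + root 3 ((97 + 3 * sqrt 69) / 2)) / 3"
  shows "beta_cubic b = 0" and "0 < b"
proof -
  have "root 3 ((97\<^sup>2 - (3 * sqrt 69)\<^sup>2) / 4) = 13"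
    by (simp add: power_mult_distrib real_root_pos_unique)
  moreover have "3 * b - 2 = root 3 ((97 - 3 * sqrt 69) / 2) + root 3 ((97 + 3 * sqrt 69) / 2)"
    using assms by simp
  ultimately have "(3 * b - 2) ^ 3 = 97 + 39 * (3 * b - 2)"
    using cardano_cube [of 97 "3 * sqrt 69"] by simp
  then show "beta_cubic b = 0"
    unfolding beta_cubic_def by algebra
  have "0 < root 3 ((97 - 3 * sqrt 69) / 2) + root 3 ((97 + 3 * sqrt 69) / 2)"
    by (rule cube_root_add_pos) (simp add: field_simps)
  then show "0 < b"
    using assms by simp
qed

lemma beta_cubic_positive_root_gt_2:
  fixes x :: real
  assumes "beta_cubic x = 0" and "0 < x"
  shows "2 < x"
proof -
  have "x\<^sup>2 * (x - 2) = 3 * x + 1"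
    using assms(1) unfolding beta_cubic_def
    by (simp add: power2_eq_square power3_eq_cube algebra_simps)
  then have "0 < x\<^sup>2 * (x - 2)"
    using assms(2) by simp
  then show ?thesis
    by (simp add: zero_less_mult_iff)
qed

lemma beta_cubic_positive_root_unique:
  fixes x y :: real
  assumes "beta_cubic x = 0" "0 < x" and "beta_cubic y = 0" "0 < y"
  shows "x = y"
proof -
  have x2: "2 < x" and y2: "2 < y"
    using assms beta_cubic_positive_root_gt_2 by blast+
  have "(x - y) * (x\<^sup>2 + x * y + y\<^sup>2 - 2 * x - 2 * y - 3) = 0"
    using assms(1,3) unfolding beta_cubic_def by algebra
  moreover have "x\<^sup>2 + x * y + y\<^sup>2 - 2 * x - 2 * y - 3 > 0"
  proof -
    have "x * (x - 2) > 0" "y * (y - 2) > 0"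
      using x2 y2 by simp_all
    moreover have "x * y > 4"
      using mult_strict_mono [of 2 x 2 y] x2 y2 by simp
    ultimately show ?thesis
      by (simp add: power2_eq_square algebra_simps)
  qed
  ultimately show ?thesis
    by simp
qed

lemma logistic_one_minus: "logistic \<gamma> (1 - x) = logistic \<gamma> x"
  by (simp add: logistic_def)

lemma not_periodic_point_if_caught:
  assumes "f x \<in> S" and "f ` S \<subseteq> S" and "x \<notin> S"
  shows "\<not> periodic_point f x"
proof -
  have "(f ^^ Suc n) x \<in> S" for n
    by (induction n) (use assms in auto)
  then show ?thesis
    unfolding periodic_point_def using assms(3) by (metis gr0_implies_Suc)
qed

locale plastic =
  fixes a :: real
  assumes cube: "a ^ 3 = a + 1"
    and pos: "0 < a"
begin

lemma gt_one: "1 < a"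
proof (rule ccontr)
  assume "\<not> 1 < a"
  then have "a ^ 3 \<le> a"
    using pos by (simp add: power3_eq_cube mult_le_one)
  then show False
    using cube by simp
qed

lemma beta_cubic_fourth_power: "beta_cubic (a ^ 4) = 0"
  using cube unfolding beta_cubic_def by algebra

lemma inv_sq_add_inv_cube: "1 / a\<^sup>2 + 1 / a ^ 3 = 1"
proof -
  have "1 / a\<^sup>2 + 1 / a ^ 3 = (a + 1) / a ^ 3"
    using pos by (simp add: field_simps power2_eq_square power3_eq_cube)
  then show ?thesis
    using cube pos by simp
qed

lemma one_minus_inv_cube: "1 - 1 / a ^ 3 = 1 / a\<^sup>2"
  using inv_sq_add_inv_cube by simp

lemma one_minus_inv_sq: "1 - 1 / a\<^sup>2 = 1 / a ^ 3"
  using inv_sq_add_inv_cube by simp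

lemma one_minus_inv: "1 - 1 / a = 1 / a ^ 5"
proof -
  have "1 - 1 / a = (a - 1) * a ^ 4 / a ^ 5"
    using pos by (simp add: field_simps eval_nat_numeral)
  also have "(a - 1) * a ^ 4 = 1"
    using cube by algebra
  finally show ?thesis .
qed

lemma logistic_cube_inv_sq: "logistic (a ^ 3) (1 / a\<^sup>2) = 1 / a\<^sup>2"
  using pos unfolding logistic_def one_minus_inv_sq by (simp add: field_simps eval_nat_numeral)

lemma logistic_cube_inv_cube: "logistic (a ^ 3) (1 / a ^ 3) = 1 / a\<^sup>2"
  using logistic_cube_inv_sq logistic_one_minus by (metis one_minus_inv_cube)

lemma logistic_cube_inv: "logistic (a ^ 3) (1 / a) = 1 / a ^ 3"
  using pos unfolding logistic_def one_minus_inv by (simp add: field_simps eval_nat_numeral)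

lemma logistic_fourth_inv_cube: "logistic (a ^ 4) (1 / a ^ 3) = 1 / a"
  using pos unfolding logistic_def one_minus_inv_cube by (simp add: field_simps eval_nat_numeral)

lemma logistic_fourth_inv_sq: "logistic (a ^ 4) (1 / a\<^sup>2) = 1 / a"
  using logistic_fourth_inv_cube logistic_one_minus by (metis one_minus_inv_sq)

lemma logistic_fourth_inv: "logistic (a ^ 4) (1 / a) = 1 / a\<^sup>2"
  using pos unfolding logistic_def one_minus_inv by (simp add: field_simps eval_nat_numeral)

lemma sqrt_beta_discriminant: "sqrt ((a ^ 4 + 1) * (a ^ 4 - 3)) = a\<^sup>2 * (a - 1)"
proof (rule real_sqrt_unique)
  show "(a\<^sup>2 * (a - 1))\<^sup>2 = (a ^ 4 + 1) * (a ^ 4 - 3)"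
    using cube by algebra
  show "0 \<le> a\<^sup>2 * (a - 1)"
    using gt_one by simp
qed

lemma logistic_fourth_period_two_points:
  "(a ^ 4 + 1 + sqrt ((a ^ 4 + 1) * (a ^ 4 - 3))) / (2 * a ^ 4) = 1 / a"
  "(a ^ 4 + 1 - sqrt ((a ^ 4 + 1) * (a ^ 4 - 3))) / (2 * a ^ 4) = 1 / a\<^sup>2"
proof -
  have "a ^ 4 + 1 + a\<^sup>2 * (a - 1) = 2 * a ^ 3" "a ^ 4 + 1 - a\<^sup>2 * (a - 1) = 2 * a\<^sup>2"
    using cube by algebra+
  moreover have "2 * a ^ 3 / (2 * a ^ 4) = 1 / a" "2 * a\<^sup>2 / (2 * a ^ 4) = 1 / a\<^sup>2"
    using pos by (simp_all add: eval_nat_numeral)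
  ultimately show "(a ^ 4 + 1 + sqrt ((a ^ 4 + 1) * (a ^ 4 - 3))) / (2 * a ^ 4) = 1 / a"
    "(a ^ 4 + 1 - sqrt ((a ^ 4 + 1) * (a ^ 4 - 3))) / (2 * a ^ 4) = 1 / a\<^sup>2"
    unfolding sqrt_beta_discriminant by simp_all
qed

lemma inverse_powers_distinct: "1 / a ^ 3 < 1 / a\<^sup>2" "1 / a\<^sup>2 < 1 / a"
proof -
  have "a < a\<^sup>2" "a\<^sup>2 < a ^ 3"
    using gt_one pos by (simp_all add: power2_eq_square power3_eq_cube)
  then show "1 / a ^ 3 < 1 / a\<^sup>2" "1 / a\<^sup>2 < 1 / a"
    using pos by (simp_all add: frac_less2)
qed

lemma card_inverse_powers: "card {1 / a\<^sup>2, 1 / a ^ 3, 1 / a} = 3"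
proof -
  have "1 / a\<^sup>2 \<noteq> 1 / a ^ 3" "1 / a\<^sup>2 \<noteq> 1 / a" "1 / a ^ 3 \<noteq> 1 / a"
    using inverse_powers_distinct by linarith+
  then show ?thesis
    by simp
qed

lemma toss_and_catch:
  "ifs_invariant (logistic (a ^ 3)) (logistic (a ^ 4)) {1 / a\<^sup>2, 1 / a ^ 3, 1 / a}"
  unfolding ifs_invariant_def
  by (auto simp: logistic_cube_inv_sq logistic_cube_inv_cube logistic_cube_inv
      logistic_fourth_inv_cube logistic_fourth_inv_sq logistic_fourth_inv)

lemma bridging_inverse_cube:
  "bridging_point (logistic (a ^ 3)) (logistic (a ^ 4)) {1 / a\<^sup>2, 1 / a ^ 3, 1 / a} (1 / a ^ 3)"
proof -
  have "\<not> periodic_point (logistic (a ^ 3)) (1 / a ^ 3)"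
    by (rule not_periodic_point_if_caught [where S = "{1 / a\<^sup>2}"])
      (use inverse_powers_distinct in \<open>auto simp: logistic_cube_inv_cube logistic_cube_inv_sq\<close>)
  moreover have "\<not> periodic_point (logistic (a ^ 4)) (1 / a ^ 3)"
    by (rule not_periodic_point_if_caught [where S = "{1 / a, 1 / a\<^sup>2}"])
      (use inverse_powers_distinct in
        \<open>auto simp: logistic_fourth_inv_cube logistic_fourth_inv_sq logistic_fourth_inv\<close>)
  ultimately show ?thesis
    unfolding bridging_point_def by simp
qed

end

theorem mainTheorem2:
  fixes \<alpha> \<beta> p_plus p_minus :: real and g h :: "real \<Rightarrow> real" and \<Lambda> :: "real set"
  assumes "\<alpha> = (3 + root 3 ((27 - 3 * sqrt 69) / 2) + root 3 ((27 + 3 * sqrt 69) / 2)) / 3"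
      and "\<beta> = (2 + root 3 ((97 - 3 * sqrt 69) / 2) + root 3 ((97 + 3 * sqrt 69) / 2)) / 3"
      and "g = logistic \<alpha>"
      and "h = logistic \<beta>"
      and "p_plus = (\<beta> + 1 + sqrt ((\<beta> + 1) * (\<beta> - 3))) / (2 * \<beta>)"
      and "p_minus = (\<beta> + 1 - sqrt ((\<beta> + 1) * (\<beta> - 3))) / (2 * \<beta>)"
      and "\<Lambda> = {(\<alpha> - 1) / \<alpha>, 1 / \<alpha>, p_plus}"
  shows "p_minus = (\<alpha> - 1) / \<alpha>
       \<and> h (1 / \<alpha>) = p_plus
       \<and> g p_plus = 1 / \<alpha>
       \<and> card \<Lambda> = 3
       \<and> ifs_invariant g h \<Lambda>
       \<and> bridging_point g h \<Lambda> (1 / \<alpha>)"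
proof -
  define a where "a = \<alpha> - 1"
  have "a = (root 3 ((27 - 3 * sqrt 69) / 2) + root 3 ((27 + 3 * sqrt 69) / 2)) / 3"
    using assms(1) unfolding a_def by simp
  then interpret plastic a
    using plastic_number_from_cardano by unfold_locales
  have \<alpha>: "\<alpha> = a ^ 3"
    using cube unfolding a_def by simp
  have \<beta>: "\<beta> = a ^ 4"
    using beta_cubic_positive_root_unique
        [OF beta_cubic_from_cardano [OF assms(2)] beta_cubic_fourth_power] pos
    by simp
  have fixed_point: "(\<alpha> - 1) / \<alpha> = 1 / a\<^sup>2"
  proof -
    have "(\<alpha> - 1) / \<alpha> = a / a ^ 3"
      unfolding a_def [symmetric] by (simp add: \<alpha>)
    then show ?thesis
      using pos by (simp add: eval_nat_numeral)
  qed
  have "p_plus = 1 / a" "p_minus = 1 / a\<^sup>2"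
    using assms(5,6) logistic_fourth_period_two_points unfolding \<beta> by simp_all
  with assms(3,4,7) show ?thesis
    unfolding fixed_point unfolding \<alpha> \<beta>
    using logistic_fourth_inv_cube logistic_cube_inv card_inverse_powers toss_and_catch
      bridging_inverse_cube by simp
qed

end
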